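(* Let $d\in\mathbb{N}$, $0<\lambda<1$, $0\le\epsilon<1$, and let $\mathrm{score}(d',b)$ for $d'\in\{0,\dots,d\}$, $b\in\{0,1\}$ be as defined in the context. Then the global maximizer of $\mathrm{score}$ over $d'\in\{0,\dots,d\}$, $b\in\{0,1\}$ is as follows: (a) if $0\le\epsilon\le\frac{\lambda(\lambda(d-2)+4)}{2(\lambda(d-1)+2)}$, it is $d'=d$, $b=1$; (b) if $\epsilon=\frac{\lambda(d-1)+2}{2d}$, it is $d'=d$, $b=1$; (c) if $\epsilon\ge\frac{\lambda}{2}+\frac32\,\frac{2-\lambda}{\lambda^2(d-1)+3}$, it is $d'=0$, $b=0$.
   Context: Let $\phi(x):=\max(0,x)$, $\epsilon_+:=1-\epsilon$, $\epsilon_-:=\lambda/2-\epsilon$. Define $r_1:=\epsilon_++\frac{\lambda^2}{3}(d-1)\epsilon_-$, $r_2:=\epsilon_-+\frac{\lambda^2}{3}\epsilon_++\frac{\lambda^2}{3}(d-2)\epsilon_-$, $r_3:=\epsilon_++\frac{\lambda}{2}(d-1)\epsilon_-$, $r_4:=\epsilon_-+\frac{\lambda}{2}\epsilon_++\frac{\lambda}{2}(d-2)\epsilon_-$, $r_5:=\frac{\lambda}{2}\epsilon_++\frac{\lambda}{2}\epsilon_-+\frac{\lambda^2}{4}(d-2)\epsilon_-$, $r_6:=\lambda\epsilon_-+\frac{\lambda^2}{4}\epsilon_++\frac{\lambda^2}{4}(d-3)\epsilon_-$, $r_7:=\epsilon_++(d-1)\epsilon_-$. For $d'\in\{0,\dots,d\}$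 and $b\in\{0,1\}$ define $s_1:=br_7+r_3+(d'-1)r_4$, $s_2:=br_7+d'r_4$, $s_3:=br_3+r_1+(d'-1)r_5$, $s_4:=br_3+d'r_5$, $s_5:=br_4+r_2+r_5+(d'-2)r_6$, $s_6:=br_4+r_2+(d'-1)r_6$, $s_7:=br_4+r_5+(d'-1)r_6$, $s_8:=br_4+d'r_6$ (each a function of $(d',b)$), and $$\mathrm{score}(d',b):=d'\phi(s_1)+(d-d')\phi(s_2)+d'\phi(s_3)+(d-d')\phi(s_4)+d'(d'-1)\phi(s_5)+d'(d-d')\phi(s_6)+d'(d-d')\phi(s_7)+(d-d')(d-d'-1)\phi(s_8).$$ *)

theory Defs
  imports Complex_Main
begin

definition relu :: "real \<Rightarrow> real" where
  "relu x = max 0 x"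

definition epsP :: "real \<Rightarrow> real" where "epsP e = 1 - e"
definition epsM :: "real \<Rightarrow> real \<Rightarrow> real" where "epsM l e = l / 2 - e"

definition r1 :: "nat \<Rightarrow> real \<Rightarrow> real \<Rightarrow> real" where
  "r1 d l e = epsP e + l^2 / 3 * (real d - 1) * epsM l e"
definition r2 :: "nat \<Rightarrow> real \<Rightarrow> real \<Rightarrow> real" where
  "r2 d l e = epsM l e + l^2 / 3 * epsP e + l^2 / 3 * (real d - 2) * epsM l e"
definition r3 :: "nat \<Rightarrow> real \<Rightarrow> real \<Rightarrow> real" where
  "r3 d l e = epsP e + l / 2 * (real d - 1) * epsM l e"
definition r4 :: "nat \<Rightarrow> real \<Rightarrow> real \<Rightarrow> real" where
  "r4 d l e = epsM l e + l / 2 * epsP e + l / 2 * (real d - 2) * epsM l e"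
definition r5 :: "nat \<Rightarrow> real \<Rightarrow> real \<Rightarrow> real" where
  "r5 d l e = l / 2 * epsP e + l / 2 * epsM l e + l^2 / 4 * (real d - 2) * epsM l e"
definition r6 :: "nat \<Rightarrow> real \<Rightarrow> real \<Rightarrow> real" where
  "r6 d l e = l * epsM l e + l^2 / 4 * epsP e + l^2 / 4 * (real d - 3) * epsM l e"
definition r7 :: "nat \<Rightarrow> real \<Rightarrow> real \<Rightarrow> real" where
  "r7 d l e = epsP e + (real d - 1) * epsM l e"

definition s1 where "s1 d l e (d'::nat) (b::nat) = real b * r7 d l e + r3 d l e + (real d' - 1) * r4 d l e"
definition s2 where "s2 d l e (d'::nat) (b::nat) = real b * r7 d l e + real d' * r4 d l e"
definition s3 where "s3 d l e (d'::nat) (b::nat) = real b * r3 d l e + r1 d l e + (real d' - 1) * r5 d l e"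
definition s4 where "s4 d l e (d'::nat) (b::nat) = real b * r3 d l e + real d' * r5 d l e"
definition s5 where "s5 d l e (d'::nat) (b::nat) = real b * r4 d l e + r2 d l e + r5 d l e + (real d' - 2) * r6 d l e"
definition s6 where "s6 d l e (d'::nat) (b::nat) = real b * r4 d l e + r2 d l e + (real d' - 1) * r6 d l e"
definition s7 where "s7 d l e (d'::nat) (b::nat) = real b * r4 d l e + r5 d l e + (real d' - 1) * r6 d l e"
definition s8 where "s8 d l e (d'::nat) (b::nat) = real b * r4 d l e + real d' * r6 d l e"

definition score :: "nat \<Rightarrow> real \<Rightarrow> real \<Rightarrow> nat \<Rightarrow> nat \<Rightarrow> real" where
  "score d l e d' b =
     real d' * relu (s1 d l e d' b)
   + (real d - real d') * relu (s2 d l e d' b)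
   + real d' * relu (s3 d l e d' b)
   + (real d - real d') * relu (s4 d l e d' b)
   + real d' * (real d' - 1) * relu (s5 d l e d' b)
   + real d' * (real d - real d') * relu (s6 d l e d' b)
   + real d' * (real d - real d') * relu (s7 d l e d' b)
   + (real d - real d') * (real d - real d' - 1) * relu (s8 d l e d' b)"

definition is_global_max :: "nat \<Rightarrow> real \<Rightarrow> real \<Rightarrow> nat \<Rightarrow> nat \<Rightarrow> bool" where
  "is_global_max d l e d0 b0 \<longleftrightarrow> d0 \<le> d \<and> b0 \<le> 1 \<and>
     (\<forall>d' b. d' \<le> d \<and> b \<le> 1 \<longrightarrow> score d l e d' b \<le> score d l e d0 b0)"

end

theory Submission
  imports Defs
begin

(* The score is d' times a "chosen" part plus (d - d') times an "unchosen" part, each a sum of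
   ReLUs of affine combinations of r1, ..., r7, and these coefficients are affine in
   epsM = lambda/2 - epsilon.
   (a) Below the first threshold r4 >= 0, which makes r1, r3, r5, r7, r4 + r5 + (d-2) r6 and
   r1 + r3 + (d-1) r2 nonnegative.  Every ReLU term then exceeds the corresponding term at (d, 1)
   by at most a multiple of relu(-r2) or relu(-r6), and the last two combinations absorb these
   excesses, so both parts are bounded by the chosen part at (d, 1).
   (b) At the second value r7 = 0 and all r_i are explicit multiples of epsilon - lambda/2 > 0;
   the comparison reduces to d'(d - 2d') <= (d - d')(d - 2) for integers 0 <= d' <= d.
   (c) Above the third threshold all r_i are nonpositive, so every score vanishes. *)

lemma relu_of_nonneg: "0 \<le> x \<Longrightarrow> relu x = x"
  by (simp add: relu_def)

lemma relu_of_nonpos: "x \<le> 0 \<Longrightarrow> relu x = 0"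
  by (simp add: relu_def)

lemma relu_le: "x \<le> y \<Longrightarrow> 0 \<le> y \<Longrightarrow> relu x \<le> y"
  by (simp add: relu_def)

lemma relu_le_add: "x \<le> y + c \<Longrightarrow> 0 \<le> c \<Longrightarrow> relu x \<le> relu y + c"
  by (simp add: relu_def)

lemma mult_relu_uminus_le:
  fixes a c y :: real
  assumes "0 \<le> c" and "0 \<le> a" and "0 \<le> a + c * y"
  shows "c * relu (- y) \<le> a"
  using assms by (simp add: relu_def max_def)

(* score with the coefficients r1, ..., r7 abstracted; q and p play the roles of d and d'. *)
definition coeff_score ::
    "real \<Rightarrow> real \<Rightarrow> real \<Rightarrow> real \<Rightarrow> real \<Rightarrow> real \<Rightarrow> real
      \<Rightarrow> real \<Rightarrow> real \<Rightarrow> real \<Rightarrow> real"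
  where "coeff_score R1 R2 R3 R4 R5 R6 R7 q p b =
     p * relu (b*R7 + R3 + (p-1)*R4) + (q-p) * relu (b*R7 + p*R4)
   + p * relu (b*R3 + R1 + (p-1)*R5) + (q-p) * relu (b*R3 + p*R5)
   + p*(p-1) * relu (b*R4 + R2 + R5 + (p-2)*R6) + p*(q-p) * relu (b*R4 + R2 + (p-1)*R6)
   + p*(q-p) * relu (b*R4 + R5 + (p-1)*R6) + (q-p)*(q-p-1) * relu (b*R4 + p*R6)"

definition chosen_score ::
    "real \<Rightarrow> real \<Rightarrow> real \<Rightarrow> real \<Rightarrow> real \<Rightarrow> real \<Rightarrow> real
      \<Rightarrow> real \<Rightarrow> real \<Rightarrow> real \<Rightarrow> real"
  where "chosen_score R1 R2 R3 R4 R5 R6 R7 q p b =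
     relu (b*R7 + R3 + (p-1)*R4) + relu (b*R3 + R1 + (p-1)*R5)
   + (p-1) * relu (b*R4 + R2 + R5 + (p-2)*R6) + (q-p) * relu (b*R4 + R2 + (p-1)*R6)"

definition unchosen_score ::
    "real \<Rightarrow> real \<Rightarrow> real \<Rightarrow> real \<Rightarrow> real \<Rightarrow> real \<Rightarrow> real
      \<Rightarrow> real \<Rightarrow> real \<Rightarrow> real \<Rightarrow> real"
  where "unchosen_score R1 R2 R3 R4 R5 R6 R7 q p b =
     relu (b*R7 + p*R4) + relu (b*R3 + p*R5)
   + p * relu (b*R4 + R5 + (p-1)*R6) + (q-p-1) * relu (b*R4 + p*R6)"

context
  fixes R1 R2 R3 R4 R5 R6 R7 :: real
begin

lemma coeff_score_split:
  "coeff_score R1 R2 R3 R4 R5 R6 R7 q p b =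
     p * chosen_score R1 R2 R3 R4 R5 R6 R7 q p b
     + (q - p) * unchosen_score R1 R2 R3 R4 R5 R6 R7 q p b"
  unfolding coeff_score_def chosen_score_def unchosen_score_def by (simp add: algebra_simps)

lemma coeff_score_full:
  "coeff_score R1 R2 R3 R4 R5 R6 R7 q q 1 = q * chosen_score R1 R2 R3 R4 R5 R6 R7 q q 1"
  by (simp add: coeff_score_split)

lemma chosen_score_full:
  assumes "0 \<le> R1" "0 \<le> R3" "0 \<le> R4" "0 \<le> R5" "0 \<le> R7" and "1 \<le> q"
  shows "chosen_score R1 R2 R3 R4 R5 R6 R7 q q 1
    = (R7 + R3 + (q - 1) * R4) + (R3 + R1 + (q - 1) * R5)
      + (q - 1) * relu (R4 + R2 + R5 + (q - 2) * R6)"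
  using assms by (simp add: chosen_score_def relu_of_nonneg)

lemma chosen_tail_le:
  fixes p q :: nat
  assumes "0 \<le> R4" "0 \<le> R5" and "0 \<le> R4 + R5 + (real q - 2) * R6"
    and "1 \<le> p" "p \<le> q" "b \<le> 1"
  shows "(real p - 1) * relu (b*R4 + R2 + R5 + (real p - 2)*R6)
      + (real q - real p) * relu (b*R4 + R2 + (real p - 1)*R6)
    \<le> (real q - 1) * relu (R4 + R2 + R5 + (real q - 2) * R6) + (real q - real p) * (R4 + R5)"
proof -
  define k where "k = real (q - p)"
  define t where "t = R4 + R2 + R5 + (real q - 2) * R6"
  define N6 where "N6 = relu (- R6)"
  have k: "real q - real p = k" "0 \<le> k" using assms by (simp_all add: k_def)
  have N6: "0 \<le> N6" unfolding N6_def by (simp add: relu_def)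
  have N6_scaled: "c * (- R6) \<le> c * N6" if "0 \<le> c" for c
    using that unfolding N6_def by (intro mult_left_mono) (simp_all add: relu_def)
  have b4: "0 \<le> (1 - b) * R4"
    using assms by simp
  have "(real p - 1) * relu (b*R4 + R2 + R5 + (real p - 2)*R6) \<le> (real p - 1) * (relu t + k * N6)"
  proof (intro mult_left_mono relu_le_add)
    have "b*R4 + R2 + R5 + (real p - 2)*R6 = t - (1 - b)*R4 + k * (- R6)"
      using k by (simp add: t_def algebra_simps)
    then show "b*R4 + R2 + R5 + (real p - 2)*R6 \<le> t + k * N6"
      using N6_scaled[OF k(2)] b4 by linarith
  qed (use assms k N6 in simp_all)
  moreover have "k * relu (b*R4 + R2 + (real p - 1)*R6) \<le> k * (relu t + (k - 1) * N6)"
  proof (cases "k = 0")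
    case False
    then have "1 \<le> k" by (simp add: k_def)
    have "b*R4 + R2 + (real p - 1)*R6 = t - (1 - b)*R4 - R5 + (k - 1) * (- R6)"
      using k by (simp add: t_def algebra_simps)
    then have "b*R4 + R2 + (real p - 1)*R6 \<le> t + (k - 1) * N6"
      using N6_scaled[of "k - 1"] b4 assms \<open>1 \<le> k\<close> by linarith
    then show ?thesis
      using \<open>1 \<le> k\<close> N6 by (intro mult_left_mono relu_le_add) simp_all
  qed simp
  moreover have "k * ((real q - 2) * N6) \<le> k * (R4 + R5)"
  proof (cases "k = 0")
    case False
    then have "2 \<le> q" using assms by (simp add: k_def)
    then show ?thesis
      unfolding N6_def using assms k by (intro mult_left_mono mult_relu_uminus_le) simp_all
  qed simp
  moreover have "(real p - 1) * (relu t + k * N6) + k * (relu t + (k - 1) * N6)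
    = (real q - 1) * relu t + k * ((real q - 2) * N6)"
    using k(1) by (simp add: algebra_simps)
  ultimately show ?thesis
    unfolding t_def[symmetric] k(1) by linarith
qed

lemma unchosen_tail_le:
  fixes p q :: nat
  assumes "0 \<le> R1" "0 \<le> R3" "0 \<le> R4" "0 \<le> R5"
    and "0 \<le> R4 + R5 + (real q - 2) * R6" and "0 \<le> R1 + R3 + (real q - 1) * R2"
    and "p < q" "b \<le> 1"
  shows "real p * relu (b*R4 + R5 + (real p - 1)*R6) + (real q - real p - 1) * relu (b*R4 + real p*R6)
    \<le> (real q - 1) * relu (R4 + R2 + R5 + (real q - 2) * R6) + (R1 + R3)
      + (real q - real p - 1) * (R4 + R5)"
proof -
  define k where "k = real (q - p - 1)"
  define t where "t = R4 + R2 + R5 + (real q - 2) * R6"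
  define N2 where "N2 = relu (- R2)"
  define N6 where "N6 = relu (- R6)"
  have k: "real q - real p - 1 = k" "0 \<le> k" using assms by (simp_all add: k_def)
  have N2: "0 \<le> N2" "- R2 \<le> N2" unfolding N2_def by (simp_all add: relu_def)
  have N6: "0 \<le> N6" unfolding N6_def by (simp add: relu_def)
  have N6_scaled: "c * (- R6) \<le> c * N6" if "0 \<le> c" for c
    using that unfolding N6_def by (intro mult_left_mono) (simp_all add: relu_def)
  have b4: "0 \<le> (1 - b) * R4"
    using assms by simp
  have "real p * relu (b*R4 + R5 + (real p - 1)*R6) \<le> real p * (relu t + (N2 + k * N6))"
  proof (intro mult_left_mono relu_le_add)
    have "b*R4 + R5 + (real p - 1)*R6 = t - (1 - b)*R4 + (- R2) + k * (- R6)"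
      using k by (simp add: t_def algebra_simps)
    then show "b*R4 + R5 + (real p - 1)*R6 \<le> t + (N2 + k * N6)"
      using N6_scaled[OF k(2)] N2 b4 by linarith
  qed (use k N2 N6 in simp_all)
  moreover have "k * relu (b*R4 + real p*R6) \<le> k * (relu t + (N2 + (k - 1) * N6))"
  proof (cases "k = 0")
    case False
    then have "1 \<le> k" by (simp add: k_def)
    have "b*R4 + real p*R6 = t - (1 - b)*R4 - R5 + (- R2) + (k - 1) * (- R6)"
      using k by (simp add: t_def algebra_simps)
    then have "b*R4 + real p*R6 \<le> t + (N2 + (k - 1) * N6)"
      using N6_scaled[of "k - 1"] N2 b4 assms \<open>1 \<le> k\<close> by linarith
    then show ?thesis
      using \<open>1 \<le> k\<close> N2 N6 by (intro mult_left_mono relu_le_add) simp_all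
  qed simp
  moreover have "(real q - 1) * N2 \<le> R1 + R3"
    unfolding N2_def using assms by (intro mult_relu_uminus_le) simp_all
  moreover have "k * ((real q - 2) * N6) \<le> k * (R4 + R5)"
  proof (cases "k = 0")
    case False
    then have "2 \<le> q" using assms by (simp add: k_def)
    then show ?thesis
      unfolding N6_def using assms k by (intro mult_left_mono mult_relu_uminus_le) simp_all
  qed simp
  moreover have "real p * (relu t + (N2 + k * N6)) + k * (relu t + (N2 + (k - 1) * N6))
    = (real q - 1) * relu t + (real q - 1) * N2 + k * ((real q - 2) * N6)"
    using k(1) by (simp add: algebra_simps)
  ultimately show ?thesis
    unfolding t_def[symmetric] k(1) by linarith
qed

lemma chosen_score_le_full:
  fixes p q :: nat
  assumes "0 \<le> R1" "0 \<le> R3" "0 \<le> R4" "0 \<le> R5" "0 \<le> R7"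
    and "0 \<le> R4 + R5 + (real q - 2) * R6"
    and "1 \<le> p" "p \<le> q" "0 \<le> b" "b \<le> 1"
  shows "chosen_score R1 R2 R3 R4 R5 R6 R7 (real q) (real p) b
    \<le> chosen_score R1 R2 R3 R4 R5 R6 R7 (real q) (real q) 1"
proof -
  have "chosen_score R1 R2 R3 R4 R5 R6 R7 (real q) (real p) b
    = (b*R7 + R3 + (real p - 1)*R4) + (b*R3 + R1 + (real p - 1)*R5)
      + (real p - 1) * relu (b*R4 + R2 + R5 + (real p - 2)*R6)
      + (real q - real p) * relu (b*R4 + R2 + (real p - 1)*R6)"
    using assms by (simp add: chosen_score_def relu_of_nonneg)
  moreover have "0 \<le> (1 - b) * (R7 + R3)"
    using assms by simp
  moreover have "(b*R7 + R3 + (real p - 1)*R4) + (b*R3 + R1 + (real p - 1)*R5)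
      + (real q - real p) * (R4 + R5) + (1 - b) * (R7 + R3)
    = (R7 + R3 + (real q - 1) * R4) + (R3 + R1 + (real q - 1) * R5)"
    by (simp add: algebra_simps)
  moreover have "chosen_score R1 R2 R3 R4 R5 R6 R7 (real q) (real q) 1
    = (R7 + R3 + (real q - 1) * R4) + (R3 + R1 + (real q - 1) * R5)
      + (real q - 1) * relu (R4 + R2 + R5 + (real q - 2) * R6)"
    using assms by (intro chosen_score_full) simp_all
  ultimately show ?thesis
    using chosen_tail_le[of q p b, OF assms(3,4,6,7,8,10)] by linarith
qed

lemma unchosen_score_le_full:
  fixes p q :: nat
  assumes "0 \<le> R1" "0 \<le> R3" "0 \<le> R4" "0 \<le> R5" "0 \<le> R7"
    and "0 \<le> R4 + R5 + (real q - 2) * R6" and "0 \<le> R1 + R3 + (real q - 1) * R2"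
    and "p < q" "0 \<le> b" "b \<le> 1"
  shows "unchosen_score R1 R2 R3 R4 R5 R6 R7 (real q) (real p) b
    \<le> chosen_score R1 R2 R3 R4 R5 R6 R7 (real q) (real q) 1"
proof -
  have "unchosen_score R1 R2 R3 R4 R5 R6 R7 (real q) (real p) b
    = (b*R7 + real p*R4) + (b*R3 + real p*R5) + real p * relu (b*R4 + R5 + (real p - 1)*R6)
      + (real q - real p - 1) * relu (b*R4 + real p*R6)"
    using assms by (simp add: unchosen_score_def relu_of_nonneg)
  moreover have "0 \<le> (1 - b) * (R7 + R3)"
    using assms by simp
  moreover have "(b*R7 + real p*R4) + (b*R3 + real p*R5) + (R1 + R3)
      + (real q - real p - 1) * (R4 + R5) + (1 - b) * (R7 + R3)
    = (R7 + R3 + (real q - 1) * R4) + (R3 + R1 + (real q - 1) * R5)"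
    by (simp add: algebra_simps)
  moreover have "chosen_score R1 R2 R3 R4 R5 R6 R7 (real q) (real q) 1
    = (R7 + R3 + (real q - 1) * R4) + (R3 + R1 + (real q - 1) * R5)
      + (real q - 1) * relu (R4 + R2 + R5 + (real q - 2) * R6)"
    using assms by (intro chosen_score_full) simp_all
  ultimately show ?thesis
    using unchosen_tail_le[of q p b, OF assms(1-4,6,7,8,10)] by linarith
qed

lemma coeff_score_le_full:
  fixes p q :: nat
  assumes "0 \<le> R1" "0 \<le> R3" "0 \<le> R4" "0 \<le> R5" "0 \<le> R7"
    and "0 \<le> R4 + R5 + (real q - 2) * R6" and "0 \<le> R1 + R3 + (real q - 1) * R2"
    and "p \<le> q" "0 \<le> b" "b \<le> 1"
  shows "coeff_score R1 R2 R3 R4 R5 R6 R7 (real q) (real p) b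
    \<le> coeff_score R1 R2 R3 R4 R5 R6 R7 (real q) (real q) 1"
proof -
  define T where "T = chosen_score R1 R2 R3 R4 R5 R6 R7 (real q) (real q) 1"
  have "real p * chosen_score R1 R2 R3 R4 R5 R6 R7 (real q) (real p) b \<le> real p * T"
    unfolding T_def using assms chosen_score_le_full[of q p b]
    by (cases "p = 0") (simp_all add: mult_left_mono)
  moreover have "(real q - real p) * unchosen_score R1 R2 R3 R4 R5 R6 R7 (real q) (real p) b
    \<le> (real q - real p) * T"
    unfolding T_def using assms unchosen_score_le_full[of q p b]
    by (cases "p = q") (simp_all add: mult_left_mono)
  moreover have "real p * T + (real q - real p) * T = real q * T"
    by (simp add: algebra_simps)
  ultimately show ?thesis
    unfolding coeff_score_split[of "real q"] coeff_score_full T_def by linarith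
qed

lemma coeff_score_eq_0:
  fixes p :: nat
  assumes nonpos: "R1 \<le> 0" "R2 \<le> 0" "R3 \<le> 0" "R4 \<le> 0" "R5 \<le> 0" "R6 \<le> 0" "R7 \<le> 0"
    and "0 \<le> b"
  shows "coeff_score R1 R2 R3 R4 R5 R6 R7 q (real p) b = 0"
proof -
  have scaled: "c * R \<le> 0" if "0 \<le> c" "R \<le> 0" for c R :: real
    using that by (rule mult_nonneg_nonpos)
  note b_scaled = nonpos[THEN scaled[OF \<open>0 \<le> b\<close>]]
  consider "p = 0" | "p = 1" | "2 \<le> p" by linarith
  then show ?thesis
  proof cases
    case 3
    then have "0 \<le> real p - 2" "0 \<le> real p - 1" "0 \<le> real p" by simp_all
    then show ?thesis
      using nonpos b_scaled nonpos[THEN scaled[OF \<open>0 \<le> real p - 1\<close>]]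
        nonpos[THEN scaled[OF \<open>0 \<le> real p - 2\<close>]] nonpos[THEN scaled[OF \<open>0 \<le> real p\<close>]]
      by (simp add: coeff_score_def relu_of_nonpos)
  qed (use nonpos b_scaled in \<open>simp_all add: coeff_score_def relu_of_nonpos\<close>)
qed

end

(* The coefficient pattern at the value of (b), see r_at_threshold_b below. *)
context
  fixes A C U :: real and q :: nat
  assumes A_nonneg: "0 \<le> A" and A_le_C: "A \<le> C" and U_nonneg: "0 \<le> U" and U_le_C: "2 * U \<le> C"
    and two_le_q: "2 \<le> q"
begin

lemma boundary_chosen_score_le:
  fixes p :: nat
  assumes "1 \<le> p" "p \<le> q" "0 \<le> b" "b \<le> 1"
  shows "chosen_score ((real q - 1) * C) (- C) ((real q - 1) * A) (- A) ((real q - 2) * U) (- 2 * U) 0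
           (real q) (real p) b
    \<le> (real q - real p) * A + ((real q - 1) * A + (real q - 1) * C + (real p - 1) * ((real q - 2) * U))
      + (real p - 1) * relu ((real q - 2 * real p) * U)"
proof -
  define V where "V = relu ((real q - 2 * real p) * U)"
  have V: "(real q - 2 * real p) * U \<le> V" "0 \<le> V"
    unfolding V_def by (simp_all add: relu_def)
  have nonneg: "0 \<le> b * A" "b * ((real q - 1) * A) \<le> (real q - 1) * A" "0 \<le> (real q - 1) * A"
    "0 \<le> (real q - 1) * C" "0 \<le> (real p - 1) * ((real q - 2) * U)" "0 \<le> (real p - 1) * (2 * U)"
    using A_nonneg A_le_C U_nonneg two_le_q assms by (simp_all add: mult_left_le_one_le)
  have "b * 0 + (real q - 1) * A + (real p - 1) * - A = (real q - real p) * A"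
    by (simp add: algebra_simps)
  then have "relu (b * 0 + (real q - 1) * A + (real p - 1) * - A) = (real q - real p) * A"
    using A_nonneg assms by (simp add: relu_of_nonneg)
  moreover have "relu (b * ((real q - 1) * A) + (real q - 1) * C + (real p - 1) * ((real q - 2) * U))
      \<le> (real q - 1) * A + (real q - 1) * C + (real p - 1) * ((real q - 2) * U)"
    using nonneg by (intro relu_le) linarith+
  moreover have "(real p - 1) * relu (b * - A + - C + (real q - 2) * U + (real p - 2) * (- 2 * U))
      \<le> (real p - 1) * V"
  proof (intro mult_left_mono relu_le)
    have "b * - A + - C + (real q - 2) * U + (real p - 2) * (- 2 * U)
      = (real q - 2 * real p) * U - b * A - (C - 2 * U)"
      by (simp add: algebra_simps)
    then show "b * - A + - C + (real q - 2) * U + (real p - 2) * (- 2 * U) \<le> V"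
      using V nonneg U_le_C by linarith
  qed (use V assms in simp_all)
  moreover have "relu (b * - A + - C + (real p - 1) * (- 2 * U)) = 0"
    using nonneg A_nonneg A_le_C by (intro relu_of_nonpos) linarith
  ultimately show ?thesis
    unfolding chosen_score_def V_def[symmetric] by simp
qed

lemma boundary_unchosen_score_le:
  fixes p :: nat
  assumes "0 \<le> b" "b \<le> 1"
  shows "unchosen_score ((real q - 1) * C) (- C) ((real q - 1) * A) (- A) ((real q - 2) * U) (- 2 * U) 0
           (real q) (real p) b
    \<le> ((real q - 1) * A + real p * ((real q - 2) * U)) + real p * relu ((real q - 2 * real p) * U)"
proof -
  define V where "V = relu ((real q - 2 * real p) * U)"
  have V: "(real q - 2 * real p) * U \<le> V" "0 \<le> V"
    unfolding V_def by (simp_all add: relu_def)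
  have nonneg: "0 \<le> b * A" "b * ((real q - 1) * A) \<le> (real q - 1) * A" "0 \<le> (real q - 1) * A"
    "0 \<le> real p * ((real q - 2) * U)" "0 \<le> real p * (2 * U)" "0 \<le> real p * A"
    using A_nonneg U_nonneg two_le_q assms by (simp_all add: mult_left_le_one_le)
  have "relu (b * 0 + real p * - A) = 0"
    using nonneg by (intro relu_of_nonpos) simp
  moreover have "relu (b * ((real q - 1) * A) + real p * ((real q - 2) * U))
      \<le> (real q - 1) * A + real p * ((real q - 2) * U)"
    using nonneg by (intro relu_le) linarith+
  moreover have "real p * relu (b * - A + (real q - 2) * U + (real p - 1) * (- 2 * U)) \<le> real p * V"
  proof (intro mult_left_mono relu_le)
    have "b * - A + (real q - 2) * U + (real p - 1) * (- 2 * U) = (real q - 2 * real p) * U - b * A"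
      by (simp add: algebra_simps)
    then show "b * - A + (real q - 2) * U + (real p - 1) * (- 2 * U) \<le> V"
      using V nonneg by linarith
  qed (use V in simp_all)
  moreover have "relu (b * - A + real p * (- 2 * U)) = 0"
    using nonneg by (intro relu_of_nonpos) (simp add: algebra_simps)
  ultimately show ?thesis
    unfolding unchosen_score_def V_def[symmetric] by simp
qed

lemma boundary_chosen_score_full:
  "chosen_score ((real q - 1) * C) (- C) ((real q - 1) * A) (- A) ((real q - 2) * U) (- 2 * U) 0
     (real q) (real q) 1
   = (real q - 1) * A + (real q - 1) * C + (real q - 1) * ((real q - 2) * U)"
proof -
  have nonneg: "0 \<le> (real q - 1) * A" "0 \<le> (real q - 1) * C"
    "0 \<le> (real q - 1) * ((real q - 2) * U)" "0 \<le> (real q - 2) * U"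
    using A_nonneg A_le_C U_nonneg two_le_q by simp_all
  have "relu (1 * 0 + (real q - 1) * A + (real q - 1) * - A) = 0"
    by (simp add: relu_def)
  moreover have "relu (1 * ((real q - 1) * A) + (real q - 1) * C + (real q - 1) * ((real q - 2) * U))
    = (real q - 1) * A + (real q - 1) * C + (real q - 1) * ((real q - 2) * U)"
    using nonneg by (simp add: relu_of_nonneg)
  moreover have "relu (1 * - A + - C + (real q - 2) * U + (real q - 2) * (- 2 * U)) = 0"
  proof (rule relu_of_nonpos)
    have "1 * - A + - C + (real q - 2) * U + (real q - 2) * (- 2 * U) = - A - C - (real q - 2) * U"
      by (simp add: algebra_simps)
    then show "1 * - A + - C + (real q - 2) * U + (real q - 2) * (- 2 * U) \<le> 0"
      using nonneg A_nonneg A_le_C by linarith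
  qed
  ultimately show ?thesis
    unfolding chosen_score_def by simp
qed

lemma boundary_relu_le:
  fixes p :: nat
  assumes "p \<le> q"
  shows "real p * relu ((real q - 2 * real p) * U) \<le> (real q - real p) * ((real q - 2) * U)"
proof (cases "real q \<le> 2 * real p \<or> p = 0")
  case True
  then have "relu ((real q - 2 * real p) * U) = 0 \<or> p = 0"
    using U_nonneg by (auto intro: relu_of_nonpos simp: mult_nonpos_nonneg)
  moreover have "0 \<le> (real q - real p) * ((real q - 2) * U)"
    using assms U_nonneg two_le_q by simp
  ultimately show ?thesis
    by auto
next
  case False
  then have "2 * p < q" "0 < p"
    by (simp_all flip: of_nat_mult)
  then have "real p \<le> real q - 2"
    by simp
  then have "real p * (real q - 2 * real p) \<le> (real q - 2) * (real q - real p)"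
    using False by (intro mult_mono) auto
  then have "real p * ((real q - 2 * real p) * U) \<le> (real q - real p) * ((real q - 2) * U)"
    using U_nonneg by (metis mult.assoc mult.commute mult_right_mono)
  then show ?thesis
    using False U_nonneg by (simp add: relu_of_nonneg)
qed

lemma boundary_coeff_score_le_full:
  fixes p :: nat
  assumes "p \<le> q" "0 \<le> b" "b \<le> 1"
  shows "coeff_score ((real q - 1) * C) (- C) ((real q - 1) * A) (- A) ((real q - 2) * U) (- 2 * U) 0
           (real q) (real p) b
    \<le> coeff_score ((real q - 1) * C) (- C) ((real q - 1) * A) (- A) ((real q - 2) * U) (- 2 * U) 0
           (real q) (real q) 1"
proof -
  define V where "V = relu ((real q - 2 * real p) * U)"
  have "real p * chosen_score ((real q - 1) * C) (- C) ((real q - 1) * A) (- A) ((real q - 2) * U)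
      (- 2 * U) 0 (real q) (real p) b
    \<le> real p * ((real q - real p) * A + ((real q - 1) * A + (real q - 1) * C
      + (real p - 1) * ((real q - 2) * U)) + (real p - 1) * V)"
    unfolding V_def using boundary_chosen_score_le[of p b] assms
    by (cases "p = 0") (simp_all add: mult_left_mono)
  moreover have "(real q - real p) * unchosen_score ((real q - 1) * C) (- C) ((real q - 1) * A) (- A)
      ((real q - 2) * U) (- 2 * U) 0 (real q) (real p) b
    \<le> (real q - real p) * (((real q - 1) * A + real p * ((real q - 2) * U)) + real p * V)"
    unfolding V_def using boundary_unchosen_score_le[of b p] assms by (simp add: mult_left_mono)
  moreover have "real p * A \<le> (real q - 1) * C" if "p < q"
  proof -
    have "real p * A \<le> (real q - 1) * A" using that A_nonneg by (simp add: mult_right_mono)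
    also have "\<dots> \<le> (real q - 1) * C" using two_le_q A_le_C by (simp add: mult_left_mono)
    finally show ?thesis .
  qed
  then have "0 \<le> (real q - real p) * ((real q - 1) * C - real p * A)"
    using assms by (cases "p = q") simp_all
  moreover have "0 \<le> (real q - 1) * ((real q - real p) * ((real q - 2) * U) - real p * V)"
    unfolding V_def using boundary_relu_le[of p] assms two_le_q by simp
  moreover have "real q * ((real q - 1) * A + (real q - 1) * C + (real q - 1) * ((real q - 2) * U))
    - real p * ((real q - real p) * A + ((real q - 1) * A + (real q - 1) * C
      + (real p - 1) * ((real q - 2) * U)) + (real p - 1) * V)
    - (real q - real p) * (((real q - 1) * A + real p * ((real q - 2) * U)) + real p * V)
    = (real q - real p) * ((real q - 1) * C - real p * A)
      + (real q - 1) * ((real q - real p) * ((real q - 2) * U) - real p * V)"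
    by (simp add: algebra_simps)
  ultimately show ?thesis
    unfolding coeff_score_split[where q = "real q"] coeff_score_full boundary_chosen_score_full
    by linarith
qed

end

lemma score_eq_coeff_score:
  "score d l e d' b = coeff_score (r1 d l e) (r2 d l e) (r3 d l e) (r4 d l e) (r5 d l e) (r6 d l e)
     (r7 d l e) (real d) (real d') (real b)"
  unfolding score_def coeff_score_def s1_def s2_def s3_def s4_def s5_def s6_def s7_def s8_def
  by simp

lemma r7_eq: "r7 d l e = (1 - e) + (real d - 1) * epsM l e"
  unfolding r7_def epsP_def ..

lemma r4_eq_r7: "r4 d l e = l / 2 * r7 d l e + (1 - l / 2) * epsM l e"
  unfolding r4_def r7_def epsP_def epsM_def by (simp add: field_simps)

lemma r3_eq_r4: "r3 d l e = r4 d l e + (1 - l / 2)\<^sup>2"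
  unfolding r3_def r4_def epsP_def epsM_def by (simp add: field_simps power2_eq_square)

lemma r6_eq_r4: "r6 d l e = l / 2 * r4 d l e + l / 2 * (1 - l / 2) * epsM l e"
  unfolding r6_def r4_def epsP_def epsM_def by (simp add: field_simps power2_eq_square)

lemma r5_eq_r3: "r5 d l e = l / 2 * r3 d l e + l / 2 * (1 - l / 2) * epsM l e"
  unfolding r5_def r3_def epsP_def epsM_def by (simp add: field_simps power2_eq_square)

lemma r1_eq: "r1 d l e = (1 - l / 2) + (l\<^sup>2 * (real d - 1) + 3) / 3 * epsM l e"
  unfolding r1_def epsP_def epsM_def by (simp add: field_simps power2_eq_square)

lemma r1_eq_r7: "r1 d l e = r7 d l e - (real d - 1) * (1 - l\<^sup>2 / 3) * epsM l e"
  unfolding r1_def r7_def epsP_def epsM_def by (simp add: field_simps power2_eq_square)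

lemma r3_eq_r1: "r3 d l e = r1 d l e + (real d - 1) * (l / 2 - l\<^sup>2 / 3) * epsM l e"
  unfolding r3_def r1_def epsP_def epsM_def by (simp add: field_simps power2_eq_square)

lemma r2_eq_r7: "r2 d l e = (1 - l\<^sup>2 / 3) * epsM l e + l\<^sup>2 / 3 * r7 d l e"
  unfolding r2_def r7_def epsP_def epsM_def by (simp add: field_simps power2_eq_square)

lemma r4_eq: "2 * r4 d l e = (l * (real d - 1) + 2) * epsM l e + l * (1 - l / 2)"
  unfolding r4_def epsP_def epsM_def by (simp add: field_simps)

lemma r456_combination_eq:
  "r4 d l e + r5 d l e + (real d - 2) * r6 d l e
   = (1 + (real d - 1) * l / 2) * r4 d l e
     + l / 2 * (1 - l / 2) * ((real d - 1) * epsM l e + (1 - l / 2))"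
  unfolding r4_def r5_def r6_def epsP_def epsM_def by (simp add: field_simps power2_eq_square)

lemma r123_combination_eq:
  "r1 d l e + r3 d l e + (real d - 1) * r2 d l e
   = (1 + (real d - 1) * l\<^sup>2 / 3) * r7 d l e + r4 d l e + (1 - l / 2)\<^sup>2"
  unfolding r1_def r2_def r3_def r4_def r7_def epsP_def epsM_def
  by (simp add: field_simps power2_eq_square)

lemma r4_nonneg_below_threshold:
  assumes "0 < l" and "1 \<le> d"
    and "e \<le> l * (l * (real d - 2) + 4) / (2 * (l * (real d - 1) + 2))"
  shows "0 \<le> r4 d l e"
proof -
  have "0 < 2 * (l * (real d - 1) + 2)"
    using assms by (simp add: add_nonneg_pos)
  then have "e * (2 * (l * (real d - 1) + 2)) \<le> l * (l * (real d - 2) + 4)"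
    using assms(3) by (simp add: pos_le_divide_eq)
  moreover have "4 * r4 d l e = l * (l * (real d - 2) + 4) - e * (2 * (l * (real d - 1) + 2))"
    unfolding r4_def epsP_def epsM_def by (simp add: field_simps)
  ultimately show ?thesis
    by linarith
qed

lemma epsM_lower_bounds:
  assumes "0 < l" "l < 1" "1 \<le> d" "0 \<le> r4 d l e"
  shows "- (1 - l / 2) \<le> epsM l e" and "- (1 - l / 2) \<le> (real d - 1) * epsM l e"
proof -
  define M where "M = epsM l e"
  define x where "x = real d - 1"
  have x: "0 \<le> x" using assms by (simp add: x_def)
  have r4: "0 \<le> l * (x * M) + 2 * M + l * (1 - l / 2)"
    using r4_eq[of d l e] assms by (simp add: M_def x_def algebra_simps)
  have "- (1 - l / 2) \<le> M \<and> - (1 - l / 2) \<le> x * M"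
  proof (cases "0 \<le> M")
    case True
    then show ?thesis using x assms mult_nonneg_nonneg[OF x True] by linarith
  next
    case False
    then have "l * (x * M) \<le> 0"
      using x assms by (simp add: mult_nonneg_nonpos mult_nonneg_nonpos2)
    moreover have "l * (1 - l / 2) = l - l * l / 2"
      by (simp add: algebra_simps)
    ultimately have "- (1 - l / 2) \<le> M"
      using r4 assms zero_le_square[of l] by linarith
    moreover have "l * - (1 - l / 2) \<le> l * (x * M)"
      using r4 False by (simp add: algebra_simps)
    then have "- (1 - l / 2) \<le> x * M"
      using assms by (simp add: mult_le_cancel_left_pos)
    ultimately show ?thesis ..
  qed
  then show "- (1 - l / 2) \<le> epsM l e" and "- (1 - l / 2) \<le> (real d - 1) * epsM l e"
    by (simp_all add: M_def x_def)
qed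

lemma r7_nonneg_if_r4_nonneg:
  assumes "0 < l" "l < 1" "e < 1" "1 \<le> d" "0 \<le> r4 d l e"
  shows "0 \<le> r7 d l e"
proof (cases "0 \<le> epsM l e")
  case True
  then show ?thesis
    using assms by (simp add: r7_eq)
next
  case False
  then have "(1 - l / 2) * epsM l e \<le> 0"
    using assms by (simp add: mult_nonneg_nonpos)
  then have "0 \<le> l / 2 * r7 d l e"
    using assms r4_eq_r7[of d l e] by simp
  then show ?thesis
    using assms by (simp add: zero_le_mult_iff)
qed

lemma r1_nonneg_if_r7_nonneg:
  assumes "0 < l" "l < 1" "1 \<le> d" "0 \<le> r7 d l e"
  shows "0 \<le> r1 d l e"
proof (cases "0 \<le> epsM l e")
  case True
  then show ?thesis
    using assms by (simp add: r1_eq)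
next
  case False
  have "0 \<le> (real d - 1) * (1 - l\<^sup>2 / 3)"
    using assms power_le_one[of l 2] by simp
  then have "(real d - 1) * (1 - l\<^sup>2 / 3) * epsM l e \<le> 0"
    using False by (simp add: mult_nonneg_nonpos)
  then show ?thesis
    using assms by (simp add: r1_eq_r7)
qed

lemma r_combinations_nonneg_if_r4_nonneg:
  assumes "0 < l" "l < 1" "e < 1" "1 \<le> d" and r4: "0 \<le> r4 d l e"
  shows "0 \<le> r3 d l e" and "0 \<le> r5 d l e"
    and "0 \<le> r4 d l e + r5 d l e + (real d - 2) * r6 d l e"
    and "0 \<le> r1 d l e + r3 d l e + (real d - 1) * r2 d l e"
proof -
  define M where "M = epsM l e"
  have a: "0 < 1 - l / 2" using assms by simp
  note M_bounds = epsM_lower_bounds[OF assms(1,2,4) r4, folded M_def]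
  show "0 \<le> r3 d l e"
    using r4 by (simp add: r3_eq_r4)
  have "r5 d l e = l / 2 * r4 d l e + l / 2 * (1 - l / 2) * ((1 - l / 2) + M)"
    unfolding r5_eq_r3 r3_eq_r4 M_def by (simp add: power2_eq_square field_simps)
  moreover have "0 \<le> l / 2 * (1 - l / 2) * ((1 - l / 2) + M)" and "0 \<le> l / 2 * r4 d l e"
    using M_bounds a assms r4 by simp_all
  ultimately show "0 \<le> r5 d l e" by linarith
  have "0 \<le> l / 2 * (1 - l / 2) * ((real d - 1) * M + (1 - l / 2))"
    using M_bounds a assms by simp
  then show "0 \<le> r4 d l e + r5 d l e + (real d - 2) * r6 d l e"
    using r4 assms by (simp add: r456_combination_eq M_def[symmetric])
  show "0 \<le> r1 d l e + r3 d l e + (real d - 1) * r2 d l e"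
    using r4 assms r7_nonneg_if_r4_nonneg[OF assms] by (simp add: r123_combination_eq)
qed

lemma r1_nonpos_above_threshold:
  assumes "0 < l" "l < 1" "1 \<le> d"
    and "l / 2 + 3 / 2 * ((2 - l) / (l\<^sup>2 * (real d - 1) + 3)) \<le> e"
  shows "epsM l e < 0" and "r1 d l e \<le> 0"
proof -
  define M where "M = epsM l e"
  define E where "E = l\<^sup>2 * (real d - 1) + 3"
  have E: "0 < E" using assms by (simp add: E_def add_nonneg_pos)
  have "3 / 2 * (2 - l) / E \<le> - M"
    using assms(4) by (simp add: M_def E_def epsM_def)
  then have ME: "3 / 2 * (2 - l) \<le> - (M * E)"
    using E by (simp add: pos_divide_le_eq)
  have "0 < 3 / 2 * (2 - l)"
    using assms by simp
  then have "M * E < 0"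
    using ME by linarith
  then show "epsM l e < 0"
    using E by (simp add: M_def mult_less_0_iff)
  have "E / 3 * M \<le> - (1 - l / 2)"
    using ME by (simp add: algebra_simps)
  then show "r1 d l e \<le> 0"
    by (simp add: r1_eq M_def[symmetric] E_def[symmetric])
qed

lemma r_nonpos_if_r1_nonpos:
  assumes "0 < l" "l < 1" "1 \<le> d" "epsM l e < 0" and r1: "r1 d l e \<le> 0"
  shows "r2 d l e \<le> 0" and "r3 d l e \<le> 0" and "r4 d l e \<le> 0"
    and "r5 d l e \<le> 0" and "r6 d l e \<le> 0" and "r7 d l e \<le> 0"
proof -
  have M: "c * epsM l e \<le> 0" if "0 \<le> c" for c
    using that assms by (simp add: mult_nonneg_nonpos)
  have l2: "l\<^sup>2 \<le> l"
    using assms by (simp add: power2_eq_square mult_left_le_one_le)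
  have coeffs: "0 \<le> (real d - 1) * (1 - l\<^sup>2 / 3)" "0 \<le> (real d - 1) * (l / 2 - l\<^sup>2 / 3)"
    "0 \<le> 1 - l / 2" "0 \<le> l / 2 * (1 - l / 2)" "0 \<le> 1 - l\<^sup>2 / 3" "0 \<le> l / 2" "0 \<le> l\<^sup>2 / 3"
    using l2 assms by simp_all
  show r7: "r7 d l e \<le> 0"
    using r1 r1_eq_r7[of d l e] M[OF coeffs(1)] by linarith
  show r3: "r3 d l e \<le> 0"
    using r1 r3_eq_r1[of d l e] M[OF coeffs(2)] by linarith
  show r4: "r4 d l e \<le> 0"
    using r4_eq_r7[of d l e] M[OF coeffs(3)] mult_nonneg_nonpos[OF coeffs(6) r7] by linarith
  show "r6 d l e \<le> 0"
    using r6_eq_r4[of d l e] M[OF coeffs(4)] mult_nonneg_nonpos[OF coeffs(6) r4] by linarith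
  show "r5 d l e \<le> 0"
    using r5_eq_r3[of d l e] M[OF coeffs(4)] mult_nonneg_nonpos[OF coeffs(6) r3] by linarith
  show "r2 d l e \<le> 0"
    using r2_eq_r7[of d l e] M[OF coeffs(5)] mult_nonneg_nonpos[OF coeffs(7) r7] by linarith
qed

lemma r_at_threshold_b:
  assumes "2 * real d * e = l * (real d - 1) + 2"
  shows "r1 d l e = (real d - 1) * ((1 - l\<^sup>2 / 3) * (e - l / 2))"
    and "r2 d l e = - ((1 - l\<^sup>2 / 3) * (e - l / 2))"
    and "r3 d l e = (real d - 1) * ((1 - l / 2) * (e - l / 2))"
    and "r4 d l e = - ((1 - l / 2) * (e - l / 2))"
    and "r5 d l e = (real d - 2) * (l / 2 * (1 - l / 2) * (e - l / 2))"
    and "r6 d l e = - 2 * (l / 2 * (1 - l / 2) * (e - l / 2))"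
    and "r7 d l e = 0"
proof -
  have M: "epsM l e = - (e - l / 2)"
    by (simp add: epsM_def)
  have a: "1 - l / 2 = real d * (e - l / 2)"
    using assms by (simp add: algebra_simps)
  show r7: "r7 d l e = 0"
  proof -
    have "r7 d l e = - (2 * real d * e - (l * (real d - 1) + 2)) / 2"
      by (simp add: r7_eq epsM_def field_simps)
    then show ?thesis
      using assms by simp
  qed
  show r4: "r4 d l e = - ((1 - l / 2) * (e - l / 2))"
    by (simp add: r4_eq_r7 r7 M field_simps)
  show r3: "r3 d l e = (real d - 1) * ((1 - l / 2) * (e - l / 2))"
  proof -
    have sq: "(1 - l / 2)\<^sup>2 = (1 - l / 2) * (real d * (e - l / 2))"
      by (simp add: power2_eq_square flip: a)
    have "r3 d l e = - ((1 - l / 2) * (e - l / 2)) + (1 - l / 2) * (real d * (e - l / 2))"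
      unfolding r3_eq_r4 r4 sq ..
    also have "\<dots> = (real d - 1) * ((1 - l / 2) * (e - l / 2))"
      by (simp add: field_simps)
    finally show ?thesis .
  qed
  show "r6 d l e = - 2 * (l / 2 * (1 - l / 2) * (e - l / 2))"
    by (simp add: r6_eq_r4 r4 M field_simps)
  show "r5 d l e = (real d - 2) * (l / 2 * (1 - l / 2) * (e - l / 2))"
    by (simp add: r5_eq_r3 r3 M field_simps)
  show "r1 d l e = (real d - 1) * ((1 - l\<^sup>2 / 3) * (e - l / 2))"
    by (simp add: r1_eq_r7 r7 M field_simps)
  show "r2 d l e = - ((1 - l\<^sup>2 / 3) * (e - l / 2))"
    by (simp add: r2_eq_r7 r7 M field_simps)
qed

lemma is_global_max_zero_dim: "b \<le> 1 \<Longrightarrow> is_global_max 0 l e 0 b"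
  unfolding is_global_max_def score_eq_coeff_score by (simp add: coeff_score_def)

lemma is_global_max_full_if_r4_nonneg:
  assumes "0 < l" "l < 1" "e < 1" "1 \<le> d" "0 \<le> r4 d l e"
  shows "is_global_max d l e d 1"
  unfolding is_global_max_def score_eq_coeff_score
  using r_combinations_nonneg_if_r4_nonneg[OF assms] r7_nonneg_if_r4_nonneg[OF assms]
    r1_nonneg_if_r7_nonneg[OF assms(1,2,4) r7_nonneg_if_r4_nonneg[OF assms]] assms(5)
  by (auto intro!: coeff_score_le_full)

lemma is_global_max_full_below_threshold_a:
  assumes "0 < l" "l < 1" "e < 1"
    and "e \<le> l * (l * (real d - 2) + 4) / (2 * (l * (real d - 1) + 2))"
  shows "is_global_max d l e d 1"
proof (cases "d = 0")
  case False
  then have "0 \<le> r4 d l e"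
    using assms by (intro r4_nonneg_below_threshold) auto
  then show ?thesis
    using assms False by (intro is_global_max_full_if_r4_nonneg) auto
qed (simp add: is_global_max_zero_dim)

lemma lambda_coefficient_bounds:
  fixes l :: real
  assumes "0 < l" "l < 1"
  shows "1 - l / 2 \<le> 1 - l\<^sup>2 / 3" and "l * (1 - l / 2) \<le> 1 - l\<^sup>2 / 3"
proof -
  have "l\<^sup>2 = l * l" and "l * (1 - l / 2) = l - l * l / 2"
    by (simp_all add: algebra_simps power2_eq_square)
  moreover have "l * l \<le> l"
    using assms by (simp add: mult_left_le_one_le)
  ultimately show "1 - l / 2 \<le> 1 - l\<^sup>2 / 3" and "l * (1 - l / 2) \<le> 1 - l\<^sup>2 / 3"
    using assms zero_le_square[of l] by linarith+
qed

lemma is_global_max_full_at_threshold_b: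
  assumes "0 < l" "l < 1" "e < 1" and e: "e = (l * (real d - 1) + 2) / (2 * real d)"
  shows "is_global_max d l e d 1"
proof (cases "d = 0")
  case False
  define m where "m = e - l / 2"
  have threshold: "2 * real d * e = l * (real d - 1) + 2"
    using e False by simp
  then have dm: "real d * m = 1 - l / 2"
    by (simp add: m_def algebra_simps)
  have "d \<noteq> 1"
    using threshold assms by auto
  then have d: "2 \<le> d"
    using False by simp
  have "0 < real d * m"
    using dm assms by simp
  then have m: "0 < m"
    by (simp add: zero_less_mult_iff)
  define A where "A = (1 - l / 2) * m"
  define C where "C = (1 - l\<^sup>2 / 3) * m"
  define U where "U = l / 2 * (1 - l / 2) * m"
  have "A \<le> C" "2 * U \<le> C" "0 \<le> A" "0 \<le> U"
    using lambda_coefficient_bounds[OF assms(1,2)] m assms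
    by (simp_all add: A_def C_def U_def mult_right_mono)
  then have "coeff_score ((real d - 1) * C) (- C) ((real d - 1) * A) (- A) ((real d - 2) * U)
      (- 2 * U) 0 (real d) (real d') b
    \<le> coeff_score ((real d - 1) * C) (- C) ((real d - 1) * A) (- A) ((real d - 2) * U)
      (- 2 * U) 0 (real d) (real d) 1" if "d' \<le> d" "0 \<le> b" "b \<le> 1" for d' b
    using d that by (intro boundary_coeff_score_le_full)
  then show ?thesis
    unfolding is_global_max_def score_eq_coeff_score r_at_threshold_b[OF threshold]
      m_def[symmetric] A_def[symmetric] C_def[symmetric] U_def[symmetric]
    by auto
qed (simp add: is_global_max_zero_dim)

lemma is_global_max_zero_above_threshold_c:
  assumes "0 < l" "l < 1"
    and "l / 2 + 3 / 2 * ((2 - l) / (l\<^sup>2 * (real d - 1) + 3)) \<le> e"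
  shows "is_global_max d l e 0 0"
proof (cases "d = 0")
  case False
  then have "1 \<le> d" by simp
  note r1 = r1_nonpos_above_threshold[OF assms(1,2) this assms(3)]
  have "score d l e d' b = 0" for d' b
    using r1 r_nonpos_if_r1_nonpos[OF assms(1,2) \<open>1 \<le> d\<close> r1]
    by (simp add: score_eq_coeff_score coeff_score_eq_0)
  then show ?thesis
    unfolding is_global_max_def by simp
qed (simp add: is_global_max_zero_dim)

theorem lemmaD2:
  fixes d :: nat and l e :: real
  assumes "0 < l" and "l < 1" and "0 \<le> e" and "e < 1"
  shows "(e \<le> l * (l * (real d - 2) + 4) / (2 * (l * (real d - 1) + 2))
            \<longrightarrow> is_global_max d l e d 1)
       \<and> (e = (l * (real d - 1) + 2) / (2 * real d) \<longrightarrow> is_global_max d l e d 1)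
       \<and> (e \<ge> l / 2 + 3 / 2 * ((2 - l) / (l^2 * (real d - 1) + 3))
            \<longrightarrow> is_global_max d l e 0 0)"
proof (intro conjI impI)
  assume "e \<le> l * (l * (real d - 2) + 4) / (2 * (l * (real d - 1) + 2))"
  then show "is_global_max d l e d 1"
    using assms by (intro is_global_max_full_below_threshold_a)
next
  assume "e = (l * (real d - 1) + 2) / (2 * real d)"
  then show "is_global_max d l e d 1"
    using assms by (intro is_global_max_full_at_threshold_b)
next
  assume "e \<ge> l / 2 + 3 / 2 * ((2 - l) / (l^2 * (real d - 1) + 3))"
  then show "is_global_max d l e 0 0"
    using assms by (intro is_global_max_zero_above_threshold_c)
qed

end
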